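(* Let $G$ be a cyclic union of cliques $G_1,\dots,G_m$. Then $G$ is not a stable motif (for any CTLN $W(G,\varepsilon,\delta)$ with legal parameters).
   Context: A clique is a graph in which every pair of nodes is bidirectionally connected. A cyclic union of $G_1,\dots,G_m$ is the graph on the disjoint union of their vertex sets, keeping all edges within each $G_i$, adding all edges from every node of $G_i$ to every node of $G_{i+1}$ (indices mod $m$), and no other edges. Legal parameters: $\delta>0$, $0<\varepsilon<\frac{\delta}{\delta+1}$. For a graph $H$ on $[h]$, $W=W(H,\varepsilon,\delta)$ has $W_{ii}=0$, $W_{ij}=-1+\varepsilon$ if $j\to i$, $W_{ij}=-1-\delta$ if $i\ne j$, $j\not\to i$; dynamics $\dot x_i=-x_i+[\sum_jW_{ij}x_j+\theta]_+$, $\theta>0$; assumed nondegenerate. $H$ is a stable motif if $\theta(I-W)^{-1}1$ has all entries positive and all eigenvalues of $I-W$ have positive real part. *)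

theory Defs
  imports "Jordan_Normal_Form.Matrix" "Jordan_Normal_Form.Char_Poly"
begin

(* A directed graph H on the vertex set {0..<h}: E j i means the edge j \<rightarrow> i.
   Self-loops are irrelevant (W_ii = 0). *)

definition ctln_W :: "nat \<Rightarrow> (nat \<Rightarrow> nat \<Rightarrow> bool) \<Rightarrow> real \<Rightarrow> real \<Rightarrow> real mat" where
  "ctln_W h E eps delta = mat h h (\<lambda>(i, j).
      if i = j then 0 else if E j i then -1 + eps else -1 - delta)"

definition legal_params :: "real \<Rightarrow> real \<Rightarrow> bool" where
  "legal_params eps delta \<longleftrightarrow> delta > 0 \<and> 0 < eps \<and> eps < delta / (delta + 1)"

definition stable_motif :: "nat \<Rightarrow> (nat \<Rightarrow> nat \<Rightarrow> bool) \<Rightarrow> real \<Rightarrow> real \<Rightarrow> real \<Rightarrow> bool" where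
  "stable_motif h E eps delta theta \<longleftrightarrow>
     (let A = 1\<^sub>m h - ctln_W h E eps delta in
       (\<exists>B \<in> carrier_mat h h. inverts_mat A B \<and> inverts_mat B A \<and>
           (\<forall>i < h. (theta \<cdot>\<^sub>v (B *\<^sub>v vec h (\<lambda>_. 1))) $ i > 0)) \<and>
       (\<forall>lam. eigenvalue (map_mat complex_of_real A) lam \<longrightarrow> Re lam > 0))"

(* H (on {0..<h}, edge relation E) is a cyclic union of the cliques G_0, ..., G_{m-1},
   where vertex i lies in the clique G_(c i); all cliques are nonempty. *)
definition cyclic_union_of_cliques :: "nat \<Rightarrow> (nat \<Rightarrow> nat \<Rightarrow> bool) \<Rightarrow> nat \<Rightarrow> (nat \<Rightarrow> nat) \<Rightarrow> bool" where
  "cyclic_union_of_cliques h E m c \<longleftrightarrow>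
     (\<forall>i < h. c i < m) \<and> (\<forall>k < m. \<exists>i < h. c i = k) \<and>
     (\<forall>i < h. \<forall>j < h. i \<noteq> j \<longrightarrow> (E j i \<longleftrightarrow> c i = c j \<or> c i = (c j + 1) mod m))"

end

theory Submission
  imports Defs "Jordan_Normal_Form.Spectral_Radius"
begin

(* A stable motif has all eigenvalues of I - W in the open right half-plane. The cliques form an
   equitable partition of I - W, so the eigenvalues of the m x m quotient matrix Q of block row sums
   are eigenvalues of I - W, and since m >= 2 each of them has real part below tr Q. But Q is
   entrywise nonnegative and each of its row sums exceeds tr Q, since every clique is coupled with
   weight 1 + delta to the m - 2 >= 1 cliques not adjacent to it; a nonnegative matrix whose row sums
   are at least beta has an eigenvalue of real part at least beta. Instead of Perron-Frobenius this
   is shown by shifting: for large s, T = I + (Q - tr Q)/s is nonnegative with spectral radius below 1,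
   so its powers are bounded, yet they grow geometrically on the all-ones vector. *)

section \<open>Trace and eigenvalues\<close>

definition mat_trace :: "'a::comm_ring_1 mat \<Rightarrow> 'a" where
  "mat_trace A = (\<Sum>i<dim_row A. A $$ (i,i))"

lemma mat_trace_map_of_real:
  assumes "A \<in> carrier_mat n n"
  shows "mat_trace (map_mat complex_of_real A) = complex_of_real (mat_trace A)"
  using assms by (auto simp: mat_trace_def intro!: sum.cong)

lemma mat_trace_mult_comm:
  assumes "A \<in> carrier_mat n k" and "B \<in> carrier_mat k n"
  shows "mat_trace (A * B) = mat_trace (B * A)"
proof -
  have "mat_trace (A * B) = (\<Sum>i<n. \<Sum>j<k. A $$ (i,j) * B $$ (j,i))"
    using assms unfolding mat_trace_def
    by (auto simp: scalar_prod_def atLeast0LessThan intro!: sum.cong)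
  also have "\<dots> = (\<Sum>j<k. \<Sum>i<n. B $$ (j,i) * A $$ (i,j))"
    by (subst sum.swap) (simp add: mult.commute)
  also have "\<dots> = mat_trace (B * A)"
    using assms unfolding mat_trace_def
    by (auto simp: scalar_prod_def atLeast0LessThan intro!: sum.cong)
  finally show ?thesis .
qed

lemma mat_trace_similar:
  assumes "similar_mat A B"
  shows "mat_trace A = mat_trace B"
proof -
  from similar_matD[OF assms] obtain n P P' where
    carr: "B \<in> carrier_mat n n" "P \<in> carrier_mat n n" "P' \<in> carrier_mat n n"
    and inv: "P' * P = 1\<^sub>m n" and A: "A = P * B * P'"
    by auto
  have "mat_trace A = mat_trace (P * (B * P'))"
    using A carr by (simp add: assoc_mult_mat[of P n n B n P' n])
  also have "\<dots> = mat_trace (B * P' * P)"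
    using carr by (subst mat_trace_mult_comm[where n = n and k = n]) auto
  also have "B * P' * P = B"
    using carr inv by (simp add: assoc_mult_mat[of B n n P' n P n])
  finally show ?thesis .
qed

lemma eigenvalue_iff_diag_upper_triangular:
  fixes A :: "'a::field mat"
  assumes A: "A \<in> carrier_mat n n" and B: "B \<in> carrier_mat n n"
    and "upper_triangular B" and "similar_mat A B"
  shows "eigenvalue A \<mu> \<longleftrightarrow> (\<exists>i<n. B $$ (i,i) = \<mu>)"
proof -
  have "eigenvalue A \<mu> \<longleftrightarrow> poly (char_poly B) \<mu> = 0"
    using eigenvalue_root_char_poly[OF A] char_poly_similar[OF assms(4)] by simp
  also have "\<dots> \<longleftrightarrow> \<mu> \<in> set (diag_mat B)"
    by (simp add: char_poly_upper_triangular[OF B assms(3)] poly_prod_list prod_list_zero_iff image_iff)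
  also have "\<dots> \<longleftrightarrow> (\<exists>i<n. B $$ (i,i) = \<mu>)"
    using B by (auto simp: diag_mat_def)
  finally show ?thesis .
qed

lemma eigenvalue_Re_less_mat_trace:
  fixes A :: "complex mat"
  assumes A: "A \<in> carrier_mat n n" and "n \<ge> 2"
    and pos: "\<And>\<nu>. eigenvalue A \<nu> \<Longrightarrow> Re \<nu> > 0"
    and "eigenvalue A \<mu>"
  shows "Re \<mu> < Re (mat_trace A)"
proof -
  obtain es where "char_poly A = (\<Prod>e\<leftarrow>es. [:- e, 1:])"
    using char_poly_factorized[OF A] by auto
  then obtain B where B: "B \<in> carrier_mat n n" "upper_triangular B" "similar_mat A B"
    using schur_decomposition_exists[OF A] by blast
  note eig_diag = eigenvalue_iff_diag_upper_triangular[OF A B]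
  obtain i0 where i0: "i0 < n" "B $$ (i0,i0) = \<mu>"
    using eig_diag \<open>eigenvalue A \<mu>\<close> by auto
  define i1 where "i1 = (if i0 = 0 then 1 else 0 :: nat)"
  have i1: "i1 < n" "i1 \<noteq> i0"
    using \<open>n \<ge> 2\<close> by (auto simp: i1_def)
  have "Re (mat_trace A) = (\<Sum>i<n. Re (B $$ (i,i)))"
    using mat_trace_similar[OF B(3)] B(1) by (simp add: mat_trace_def)
  also have "\<dots> = Re \<mu> + (\<Sum>i\<in>{..<n} - {i0}. Re (B $$ (i,i)))"
    using i0 by (simp add: sum.remove)
  finally have "Re (mat_trace A) = Re \<mu> + (\<Sum>i\<in>{..<n} - {i0}. Re (B $$ (i,i)))" .
  moreover have "(\<Sum>i\<in>{..<n} - {i0}. Re (B $$ (i,i))) > 0"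
    using i1 eig_diag pos by (intro sum_pos2[of _ i1]) (auto intro: less_imp_le)
  ultimately show ?thesis by simp
qed

section \<open>Equitable partitions\<close>

lemma eigenvalue_of_equitable_quotient:
  fixes A Q :: "'a::comm_ring_1 mat"
  assumes A: "A \<in> carrier_mat h h" and Q: "Q \<in> carrier_mat m m"
    and c_range: "\<And>i. i < h \<Longrightarrow> c i < m"
    and c_onto: "\<And>l. l < m \<Longrightarrow> \<exists>i<h. c i = l"
    and block_sum: "\<And>i l. i < h \<Longrightarrow> l < m \<Longrightarrow> (\<Sum>j | j < h \<and> c j = l. A $$ (i,j)) = Q $$ (c i, l)"
    and "eigenvalue Q \<mu>"
  shows "eigenvalue A \<mu>"
proof -
  obtain z where z: "z \<in> carrier_vec m" "z \<noteq> 0\<^sub>v m" "Q *\<^sub>v z = \<mu> \<cdot>\<^sub>v z"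
    using \<open>eigenvalue Q \<mu>\<close> Q unfolding eigenvalue_def eigenvector_def by auto
  define v where "v = vec h (\<lambda>i. z $ c i)"
  have "v \<noteq> 0\<^sub>v h"
  proof
    assume "v = 0\<^sub>v h"
    then have "z $ l = 0" if "l < m" for l
      using c_onto[OF that] unfolding v_def by (metis index_vec index_zero_vec(1))
    then show False
      using z by (metis eq_vecI carrier_vecD index_zero_vec)
  qed
  moreover have "A *\<^sub>v v = \<mu> \<cdot>\<^sub>v v"
  proof (rule eq_vecI)
    fix i assume "i < dim_vec (\<mu> \<cdot>\<^sub>v v)"
    then have i: "i < h" by (simp add: v_def)
    have "(A *\<^sub>v v) $ i = (\<Sum>j<h. A $$ (i,j) * z $ c j)"
      using A i by (simp add: v_def scalar_prod_def atLeast0LessThan)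
    also have "\<dots> = (\<Sum>l<m. \<Sum>j | j < h \<and> c j = l. A $$ (i,j) * z $ c j)"
      using c_range by (subst sum.group[symmetric, of "{..<h}" "{..<m}" c]) (auto intro!: sum.cong)
    also have "\<dots> = (\<Sum>l<m. Q $$ (c i, l) * z $ l)"
      using i by (auto simp: sum_distrib_right block_sum[symmetric] intro!: sum.cong)
    also have "\<dots> = (Q *\<^sub>v z) $ c i"
      using Q z(1) c_range[OF i] by (simp add: scalar_prod_def atLeast0LessThan)
    also have "\<dots> = (\<mu> \<cdot>\<^sub>v v) $ i"
      using z c_range[OF i] i by (simp add: v_def)
    finally show "(A *\<^sub>v v) $ i = (\<mu> \<cdot>\<^sub>v v) $ i" .
  qed (use A in \<open>simp add: v_def\<close>)
  moreover have "v \<in> carrier_vec h"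
    by (simp add: v_def)
  ultimately show ?thesis
    using A by (auto simp: eigenvalue_def eigenvector_def intro!: exI[of _ v])
qed

section \<open>Nonnegative and Metzler matrices\<close>

lemma nonneg_mat_pow_nonneg:
  fixes T :: "real mat"
  assumes T: "T \<in> carrier_mat n n" and nonneg: "\<And>i j. i < n \<Longrightarrow> j < n \<Longrightarrow> T $$ (i,j) \<ge> 0"
    and "i < n" and "j < n"
  shows "(T ^\<^sub>m k) $$ (i,j) \<ge> 0"
  using \<open>j < n\<close>
proof (induction k arbitrary: j)
  case 0
  then show ?case using T \<open>i < n\<close> by simp
next
  case (Suc k)
  have "(T ^\<^sub>m Suc k) $$ (i,j) = (\<Sum>l<n. (T ^\<^sub>m k) $$ (i,l) * T $$ (l,j))"
    using Suc.prems \<open>i < n\<close> T by (simp add: scalar_prod_def atLeast0LessThan)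
  also have "\<dots> \<ge> 0"
    using Suc nonneg by (intro sum_nonneg) auto
  finally show ?case .
qed

lemma nonneg_mat_pow_mult_vec_ge:
  fixes T :: "real mat"
  assumes T: "T \<in> carrier_mat n n" and nonneg: "\<And>i j. i < n \<Longrightarrow> j < n \<Longrightarrow> T $$ (i,j) \<ge> 0"
    and x: "x \<in> carrier_vec n" and growth: "\<And>i. i < n \<Longrightarrow> (T *\<^sub>v x) $ i \<ge> \<beta> * x $ i"
    and "\<beta> \<ge> 0" and "i < n"
  shows "(T ^\<^sub>m k *\<^sub>v x) $ i \<ge> \<beta> ^ k * x $ i"
  using \<open>i < n\<close>
proof (induction k arbitrary: i)
  case 0
  then show ?case using T x by simp
next
  case (Suc k)
  have Tk: "T ^\<^sub>m k \<in> carrier_mat n n" using T by simp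
  have "\<beta> ^ Suc k * x $ i \<le> \<beta> * (T ^\<^sub>m k *\<^sub>v x) $ i"
    using mult_left_mono[OF Suc.IH[OF Suc.prems] \<open>\<beta> \<ge> 0\<close>] by (simp add: mult.assoc)
  also have "\<dots> = (\<Sum>l<n. (T ^\<^sub>m k) $$ (i,l) * (\<beta> * x $ l))"
    using Suc.prems T x by (simp add: scalar_prod_def atLeast0LessThan sum_distrib_left ac_simps)
  also have "\<dots> \<le> (\<Sum>l<n. (T ^\<^sub>m k) $$ (i,l) * (T *\<^sub>v x) $ l)"
    using Suc.prems by (intro sum_mono mult_left_mono growth nonneg_mat_pow_nonneg[OF T nonneg]) auto
  also have "\<dots> = (T ^\<^sub>m k *\<^sub>v (T *\<^sub>v x)) $ i"
    using Suc.prems Tk T x by (simp add: scalar_prod_def atLeast0LessThan)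
  also have "T ^\<^sub>m k *\<^sub>v (T *\<^sub>v x) = T ^\<^sub>m Suc k *\<^sub>v x"
    using assoc_mult_mat_vec[OF Tk T x] by simp
  finally show ?case .
qed

lemma spectral_radius_less_1_pow_bounded:
  fixes T :: "real mat"
  assumes T: "T \<in> carrier_mat n n" and sr: "spectral_radius (map_mat complex_of_real T) < 1"
  obtains C where "\<And>k i j. i < n \<Longrightarrow> j < n \<Longrightarrow> (T ^\<^sub>m k) $$ (i,j) \<le> C"
proof -
  define Tc where "Tc = map_mat complex_of_real T"
  have Tc: "Tc \<in> carrier_mat n n" using T by (simp add: Tc_def)
  obtain es where "char_poly Tc = (\<Prod>e\<leftarrow>es. [:- e, 1:])"
    using char_poly_factorized[OF Tc] by auto
  then have "\<exists>n_as. jordan_nf Tc n_as"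
    by (rule jordan_nf_exists[OF Tc])
  then obtain C where C: "\<And>k. norm_bound (Tc ^\<^sub>m k) C"
    using spectral_radius_jnf_norm_bound_less_1[OF Tc sr[folded Tc_def]] by auto
  have "(T ^\<^sub>m k) $$ (i,j) \<le> C" if "i < n" "j < n" for i j k
  proof -
    have "Tc ^\<^sub>m k = map_mat complex_of_real (T ^\<^sub>m k)"
      unfolding Tc_def by (rule of_real_hom.mat_hom_pow[OF T, symmetric])
    then have "(Tc ^\<^sub>m k) $$ (i,j) = complex_of_real ((T ^\<^sub>m k) $$ (i,j))"
      using that T by simp
    moreover have "norm ((Tc ^\<^sub>m k) $$ (i,j)) \<le> C"
      using C[of k] that Tc unfolding norm_bound_def by simp
    ultimately show ?thesis by simp
  qed
  then show ?thesis by (rule that)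
qed

lemma nonneg_mat_growth_le_1:
  fixes T :: "real mat"
  assumes T: "T \<in> carrier_mat n n" and nonneg: "\<And>i j. i < n \<Longrightarrow> j < n \<Longrightarrow> T $$ (i,j) \<ge> 0"
    and sr: "spectral_radius (map_mat complex_of_real T) < 1"
    and x: "x \<in> carrier_vec n" and x_nonneg: "\<And>i. i < n \<Longrightarrow> x $ i \<ge> 0"
    and "p < n" and "x $ p > 0"
    and growth: "\<And>i. i < n \<Longrightarrow> (T *\<^sub>v x) $ i \<ge> \<beta> * x $ i"
  shows "\<beta> \<le> 1"
proof (rule ccontr)
  assume "\<not> \<beta> \<le> 1"
  then have "\<beta> > 1" by simp
  obtain C where pow_bound: "\<And>k i j. i < n \<Longrightarrow> j < n \<Longrightarrow> (T ^\<^sub>m k) $$ (i,j) \<le> C"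
    using spectral_radius_less_1_pow_bounded[OF T sr] by blast
  obtain k where "C * (\<Sum>l<n. x $ l) / x $ p < \<beta> ^ k"
    using real_arch_pow[OF \<open>\<beta> > 1\<close>] by blast
  then have "C * (\<Sum>l<n. x $ l) < \<beta> ^ k * x $ p"
    using \<open>x $ p > 0\<close> by (simp add: pos_divide_less_eq)
  also have "\<beta> ^ k * x $ p \<le> (T ^\<^sub>m k *\<^sub>v x) $ p"
    using \<open>\<beta> > 1\<close> \<open>p < n\<close> by (intro nonneg_mat_pow_mult_vec_ge[OF T nonneg x growth]) auto
  also have "\<dots> = (\<Sum>l<n. (T ^\<^sub>m k) $$ (p,l) * x $ l)"
    using \<open>p < n\<close> T x by (simp add: scalar_prod_def atLeast0LessThan)
  also have "\<dots> \<le> (\<Sum>l<n. C * x $ l)"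
    using pow_bound \<open>p < n\<close> x_nonneg by (intro sum_mono mult_right_mono) auto
  finally show False
    by (simp add: sum_distrib_left)
qed

lemma index_shift_scale_mult_mat_vec:
  fixes A :: "'a::field mat"
  assumes A: "A \<in> carrier_mat n n" and v: "v \<in> carrier_vec n" and "i < n"
  shows "((1\<^sub>m n + b \<cdot>\<^sub>m (A - a \<cdot>\<^sub>m 1\<^sub>m n)) *\<^sub>v v) $ i = v $ i + b * ((A *\<^sub>v v) $ i - a * v $ i)"
proof -
  define T where "T = 1\<^sub>m n + b \<cdot>\<^sub>m (A - a \<cdot>\<^sub>m 1\<^sub>m n)"
  have T: "T \<in> carrier_mat n n"
    unfolding T_def using A by (intro add_carrier_mat smult_carrier_mat minus_carrier_mat) auto
  have entry: "T $$ (i,j) = (if i = j then 1 - b * a else 0) + b * A $$ (i,j)" if "j < n" for j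
    using A \<open>i < n\<close> that by (simp add: T_def algebra_simps)
  have "(T *\<^sub>v v) $ i = (\<Sum>j<n. T $$ (i,j) * v $ j)"
    using T v \<open>i < n\<close> by (simp add: scalar_prod_def atLeast0LessThan)
  also have "\<dots> = (\<Sum>j<n. (if i = j then (1 - b * a) * v $ j else 0) + b * (A $$ (i,j) * v $ j))"
    by (rule sum.cong) (auto simp: entry algebra_simps)
  also have "\<dots> = (1 - b * a) * v $ i + b * (\<Sum>j<n. A $$ (i,j) * v $ j)"
    using \<open>i < n\<close> by (simp add: sum.distrib sum_distrib_left)
  also have "\<dots> = v $ i + b * ((A *\<^sub>v v) $ i - a * v $ i)"
    using A v \<open>i < n\<close> by (simp add: scalar_prod_def atLeast0LessThan algebra_simps)
  finally show ?thesis
    by (simp add: T_def)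
qed

lemma eigenvalue_of_shift_scale:
  fixes A :: "'a::field mat"
  assumes A: "A \<in> carrier_mat n n" and "b \<noteq> 0"
    and "eigenvalue (1\<^sub>m n + b \<cdot>\<^sub>m (A - a \<cdot>\<^sub>m 1\<^sub>m n)) \<nu>"
  shows "eigenvalue A (a + (\<nu> - 1) / b)"
proof -
  obtain v where v: "v \<in> carrier_vec n" "v \<noteq> 0\<^sub>v n"
    and ev: "(1\<^sub>m n + b \<cdot>\<^sub>m (A - a \<cdot>\<^sub>m 1\<^sub>m n)) *\<^sub>v v = \<nu> \<cdot>\<^sub>v v"
    using assms(3) unfolding eigenvalue_def eigenvector_def by auto
  have "A *\<^sub>v v = (a + (\<nu> - 1) / b) \<cdot>\<^sub>v v"
  proof (rule eq_vecI)
    fix i assume "i < dim_vec ((a + (\<nu> - 1) / b) \<cdot>\<^sub>v v)"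
    then have i: "i < n" using v by simp
    have "v $ i + b * ((A *\<^sub>v v) $ i - a * v $ i) = \<nu> * v $ i"
      using index_shift_scale_mult_mat_vec[OF A v(1) i, of b a] ev i v by simp
    then show "(A *\<^sub>v v) $ i = ((a + (\<nu> - 1) / b) \<cdot>\<^sub>v v) $ i"
      using i v \<open>b \<noteq> 0\<close> by (simp add: field_simps)
  qed (use A v in simp)
  then show ?thesis
    using v A unfolding eigenvalue_def eigenvector_def by auto
qed

lemma cmod_1_plus_divide_less_1:
  fixes w :: complex and s :: real
  assumes "s > 0" and "(cmod w)\<^sup>2 < 2 * s * (- Re w)"
  shows "cmod (1 + w / complex_of_real s) < 1"
proof -
  have "(cmod (1 + w / complex_of_real s))\<^sup>2 = (1 + Re w / s)\<^sup>2 + (Im w / s)\<^sup>2"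
    by (simp add: cmod_power2 Re_divide_of_real Im_divide_of_real)
  also have "\<dots> = 1 + (2 * s * Re w + ((Re w)\<^sup>2 + (Im w)\<^sup>2)) / s\<^sup>2"
    using \<open>s > 0\<close> by (simp add: field_simps power2_eq_square)
  also have "\<dots> < 1"
    using assms by (simp add: cmod_power2 divide_neg_pos)
  finally show ?thesis
    by (simp add: power_less_one_iff abs_square_less_1)
qed

lemma spectral_radius_shift_scale_less_1:
  fixes A :: "complex mat" and \<tau> s\<^sub>0 :: real
  assumes A: "A \<in> carrier_mat n n" and "n > 0"
    and left: "\<And>\<mu>. eigenvalue A \<mu> \<Longrightarrow> Re \<mu> < \<tau>"
  obtains s where "s > s\<^sub>0" and "s > 0"
    and "spectral_radius (1\<^sub>m n + complex_of_real (1 / s) \<cdot>\<^sub>m (A - complex_of_real \<tau> \<cdot>\<^sub>m 1\<^sub>m n)) < 1"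
proof -
  \<comment> \<open>Beyond \<open>bound \<mu>\<close> the point \<open>1 + (\<mu> - \<tau>) / s\<close> lies in the open unit disc.\<close>
  define bound where "bound \<mu> = (cmod (\<mu> - complex_of_real \<tau>))\<^sup>2 / (2 * (\<tau> - Re \<mu>))" for \<mu>
  define S where "S = insert 0 (insert s\<^sub>0 (bound ` spectrum A))"
  define s where "s = Max S + 1"
  have "finite S"
    using card_finite_spectrum(1)[OF A] by (simp add: S_def)
  then have less_s: "x < s" if "x \<in> S" for x
    using Max_ge[OF _ that] by (simp add: s_def)
  have "s > s\<^sub>0" and "s > 0"
    by (simp_all add: less_s S_def)
  have bound_less: "bound \<mu> < s" if "eigenvalue A \<mu>" for \<mu>
    using that by (intro less_s) (simp add: S_def spectrum_def)
  define T where "T = 1\<^sub>m n + complex_of_real (1 / s) \<cdot>\<^sub>m (A - complex_of_real \<tau> \<cdot>\<^sub>m 1\<^sub>m n)"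
  have T: "T \<in> carrier_mat n n"
    unfolding T_def using A by (intro add_carrier_mat smult_carrier_mat minus_carrier_mat) auto
  obtain \<nu> where "\<nu> \<in> spectrum T" and sr: "spectral_radius T = cmod \<nu>"
    using spectral_radius_mem_max(1)[OF T \<open>n > 0\<close>] by auto
  then have "eigenvalue T \<nu>"
    by (simp add: spectrum_def)
  then have "eigenvalue A (\<tau> + (\<nu> - 1) / complex_of_real (1 / s))"
    unfolding T_def by (rule eigenvalue_of_shift_scale[OF A, rotated]) (use \<open>s > 0\<close> in simp)
  then have ev: "eigenvalue A (\<tau> + complex_of_real s * (\<nu> - 1))"
    by (simp add: field_simps)
  define w where "w = complex_of_real s * (\<nu> - 1)"
  have "Re w < 0" and "bound (\<tau> + w) < s"
    using left[OF ev] bound_less[OF ev] by (simp_all add: w_def)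
  then have "(cmod w)\<^sup>2 < 2 * s * (- Re w)"
    by (simp add: bound_def field_simps)
  then have "cmod (1 + w / complex_of_real s) < 1"
    by (rule cmod_1_plus_divide_less_1[OF \<open>s > 0\<close>])
  moreover have "1 + w / complex_of_real s = \<nu>"
    using \<open>s > 0\<close> by (simp add: w_def field_simps)
  ultimately show ?thesis
    using that \<open>s > s\<^sub>0\<close> \<open>s > 0\<close> sr unfolding T_def by simp
qed

lemma Metzler_shift_scale_nonneg:
  fixes Q :: "real mat"
  assumes Q: "Q \<in> carrier_mat n n"
    and off_diag: "\<And>i j. i < n \<Longrightarrow> j < n \<Longrightarrow> i \<noteq> j \<Longrightarrow> Q $$ (i,j) \<ge> 0"
    and s: "s > (\<Sum>i<n. \<bar>Q $$ (i,i) - \<tau>\<bar>)" and "i < n" and "j < n"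
  shows "(1\<^sub>m n + (1 / s) \<cdot>\<^sub>m (Q - \<tau> \<cdot>\<^sub>m 1\<^sub>m n)) $$ (i,j) \<ge> 0"
proof -
  have "0 \<le> (\<Sum>i<n. \<bar>Q $$ (i,i) - \<tau>\<bar>)"
    by (simp add: sum_nonneg)
  with s have "s > 0" by linarith
  show ?thesis
  proof (cases "i = j")
    case True
    have "\<bar>Q $$ (i,i) - \<tau>\<bar> \<le> (\<Sum>i<n. \<bar>Q $$ (i,i) - \<tau>\<bar>)"
      using \<open>i < n\<close> by (intro member_le_sum) auto
    then have "1 + (Q $$ (i,i) - \<tau>) / s \<ge> 0"
      using s \<open>s > 0\<close> by (simp add: field_simps)
    then show ?thesis
      using True \<open>i < n\<close> Q by (simp add: diff_divide_distrib)
  next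
    case False
    then show ?thesis
      using assms \<open>s > 0\<close> by simp
  qed
qed

lemma Metzler_growth_le_spectral_bound:
  fixes Q :: "real mat" and \<tau> \<beta> :: real
  assumes Q: "Q \<in> carrier_mat n n"
    and off_diag: "\<And>i j. i < n \<Longrightarrow> j < n \<Longrightarrow> i \<noteq> j \<Longrightarrow> Q $$ (i,j) \<ge> 0"
    and left: "\<And>\<mu>. eigenvalue (map_mat complex_of_real Q) \<mu> \<Longrightarrow> Re \<mu> < \<tau>"
    and x: "x \<in> carrier_vec n" and x_nonneg: "\<And>i. i < n \<Longrightarrow> x $ i \<ge> 0"
    and "p < n" and "x $ p > 0"
    and growth: "\<And>i. i < n \<Longrightarrow> (Q *\<^sub>v x) $ i \<ge> \<beta> * x $ i"
  shows "\<beta> \<le> \<tau>"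
proof -
  define Qc where "Qc = map_mat complex_of_real Q"
  have Qc: "Qc \<in> carrier_mat n n" using Q by (simp add: Qc_def)
  obtain s where s_diag: "s > (\<Sum>i<n. \<bar>Q $$ (i,i) - \<tau>\<bar>)" and "s > 0"
    and sr: "spectral_radius (1\<^sub>m n + complex_of_real (1 / s) \<cdot>\<^sub>m (Qc - complex_of_real \<tau> \<cdot>\<^sub>m 1\<^sub>m n)) < 1"
    using spectral_radius_shift_scale_less_1[OF Qc _ left[folded Qc_def]] \<open>p < n\<close> by auto
  define T where "T = 1\<^sub>m n + (1 / s) \<cdot>\<^sub>m (Q - \<tau> \<cdot>\<^sub>m 1\<^sub>m n)"
  have T: "T \<in> carrier_mat n n"
    unfolding T_def using Q by (intro add_carrier_mat smult_carrier_mat minus_carrier_mat) auto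
  have "map_mat complex_of_real T = 1\<^sub>m n + complex_of_real (1 / s) \<cdot>\<^sub>m (Qc - complex_of_real \<tau> \<cdot>\<^sub>m 1\<^sub>m n)"
    using Q by (intro eq_matI) (auto simp: T_def Qc_def)
  with sr have sr_T: "spectral_radius (map_mat complex_of_real T) < 1"
    by simp
  have T_nonneg: "T $$ (i,j) \<ge> 0" if "i < n" "j < n" for i j
    unfolding T_def using Q off_diag s_diag that by (rule Metzler_shift_scale_nonneg)
  have growth_T: "(T *\<^sub>v x) $ i \<ge> (1 + (\<beta> - \<tau>) / s) * x $ i" if "i < n" for i
  proof -
    have "(1 + (\<beta> - \<tau>) / s) * x $ i \<le> x $ i + (1 / s) * ((Q *\<^sub>v x) $ i - \<tau> * x $ i)"
      using growth[OF that] \<open>s > 0\<close> by (simp add: field_simps)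
    also have "\<dots> = (T *\<^sub>v x) $ i"
      unfolding T_def using index_shift_scale_mult_mat_vec[OF Q x that] by simp
    finally show ?thesis .
  qed
  have "1 + (\<beta> - \<tau>) / s \<le> 1"
    using nonneg_mat_growth_le_1[OF T T_nonneg sr_T x x_nonneg \<open>p < n\<close> \<open>x $ p > 0\<close> growth_T] .
  then show ?thesis
    using \<open>s > 0\<close> by (simp add: divide_le_0_iff)
qed

section \<open>The quotient of a cyclic union of cliques\<close>

definition clique_size :: "nat \<Rightarrow> (nat \<Rightarrow> nat) \<Rightarrow> nat \<Rightarrow> nat" where
  "clique_size h c l = card {j. j < h \<and> c j = l}"

definition cyclic_coupling :: "nat \<Rightarrow> real \<Rightarrow> real \<Rightarrow> nat \<Rightarrow> nat \<Rightarrow> real" where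
  "cyclic_coupling m eps delta k l = (if k = l \<or> k = (l + 1) mod m then 1 - eps else 1 + delta)"

definition cyclic_quotient :: "nat \<Rightarrow> nat \<Rightarrow> (nat \<Rightarrow> nat) \<Rightarrow> real \<Rightarrow> real \<Rightarrow> real mat" where
  "cyclic_quotient h m c eps delta = mat m m (\<lambda>(k,l).
      real (clique_size h c l) * cyclic_coupling m eps delta k l + (if k = l then eps else 0))"

lemma legal_params_bounds:
  assumes "legal_params eps delta"
  shows "0 < eps" and "eps < delta" and "eps < 1"
proof -
  have "delta > 0" and "0 < eps" and bound: "eps * (delta + 1) < delta"
    using assms by (auto simp: legal_params_def field_simps)
  then show "0 < eps" by simp
  have "eps * delta > 0"
    using \<open>delta > 0\<close> \<open>0 < eps\<close> by simp
  with bound show "eps < delta"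
    by (simp add: algebra_simps)
  have "eps * (delta + 1) < 1 * (delta + 1)"
    using bound by simp
  then show "eps < 1"
    using \<open>delta > 0\<close> by (simp only: mult_less_cancel_right)
qed

lemma clique_size_pos:
  assumes "cyclic_union_of_cliques h E m c" and "l < m"
  shows "clique_size h c l > 0"
proof -
  obtain i where "i < h" "c i = l"
    using assms unfolding cyclic_union_of_cliques_def by blast
  then show ?thesis
    unfolding clique_size_def by (auto simp: card_gt_0_iff)
qed

lemma sum_clique_size:
  assumes "\<And>i. i < h \<Longrightarrow> c i < m"
  shows "(\<Sum>l<m. clique_size h c l) = h"
proof -
  have "(\<Sum>l<m. clique_size h c l) = (\<Sum>l<m. \<Sum>j | j < h \<and> c j = l. 1)"
    by (simp add: clique_size_def)
  also have "\<dots> = (\<Sum>j<h. 1)"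
    using sum.group[of "{..<h}" "{..<m}" c "\<lambda>_. 1::nat"] assms by auto
  finally show ?thesis by simp
qed

lemma ctln_I_minus_W_entry:
  assumes "cyclic_union_of_cliques h E m c" and "i < h" and "j < h"
  shows "(1\<^sub>m h - ctln_W h E eps delta) $$ (i,j)
    = cyclic_coupling m eps delta (c i) (c j) + (if i = j then eps else 0)"
  using assms by (auto simp: ctln_W_def cyclic_union_of_cliques_def cyclic_coupling_def)

lemma cyclic_quotient_block_sum:
  assumes cyc: "cyclic_union_of_cliques h E m c" and "i < h" and "l < m"
  shows "(\<Sum>j | j < h \<and> c j = l. (1\<^sub>m h - ctln_W h E eps delta) $$ (i,j))
    = cyclic_quotient h m c eps delta $$ (c i, l)"
proof -
  have "c i < m"
    using cyc \<open>i < h\<close> by (simp add: cyclic_union_of_cliques_def)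
  have "(\<Sum>j | j < h \<and> c j = l. (1\<^sub>m h - ctln_W h E eps delta) $$ (i,j))
      = (\<Sum>j | j < h \<and> c j = l. cyclic_coupling m eps delta (c i) l + (if i = j then eps else 0))"
    using ctln_I_minus_W_entry[OF cyc \<open>i < h\<close>] by (intro sum.cong) auto
  also have "\<dots> = real (clique_size h c l) * cyclic_coupling m eps delta (c i) l
      + (if c i = l then eps else 0)"
    using \<open>i < h\<close> by (simp add: sum.distrib clique_size_def)
  also have "\<dots> = cyclic_quotient h m c eps delta $$ (c i, l)"
    using \<open>c i < m\<close> \<open>l < m\<close> by (simp add: cyclic_quotient_def)
  finally show ?thesis .
qed

lemma eigenvalue_cyclic_quotient:
  assumes cyc: "cyclic_union_of_cliques h E m c"
    and "eigenvalue (map_mat complex_of_real (cyclic_quotient h m c eps delta)) \<mu>"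
  shows "eigenvalue (map_mat complex_of_real (1\<^sub>m h - ctln_W h E eps delta)) \<mu>"
proof (rule eigenvalue_of_equitable_quotient)
  fix i l assume "i < h" "l < m"
  then show "(\<Sum>j | j < h \<and> c j = l. map_mat complex_of_real (1\<^sub>m h - ctln_W h E eps delta) $$ (i,j))
      = map_mat complex_of_real (cyclic_quotient h m c eps delta) $$ (c i, l)"
    using cyc cyclic_quotient_block_sum[OF cyc, of i l eps delta, symmetric]
    by (simp add: ctln_W_def cyclic_quotient_def cyclic_union_of_cliques_def)
qed (use assms in \<open>auto simp: ctln_W_def cyclic_quotient_def cyclic_union_of_cliques_def\<close>)

lemma mat_trace_cyclic_quotient:
  assumes "cyclic_union_of_cliques h E m c"
  shows "mat_trace (cyclic_quotient h m c eps delta) = real m * eps + (1 - eps) * real h"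
proof -
  have "mat_trace (cyclic_quotient h m c eps delta) = (\<Sum>l<m. eps + (1 - eps) * real (clique_size h c l))"
    by (simp add: mat_trace_def cyclic_quotient_def cyclic_coupling_def algebra_simps)
  also have "\<dots> = real m * eps + (1 - eps) * real h"
    using assms sum_clique_size[of h c m]
    by (simp add: sum.distrib sum_distrib_left[symmetric] cyclic_union_of_cliques_def flip: of_nat_sum)
  finally show ?thesis .
qed

lemma card_cyclic_in_neighbours_le_2:
  fixes k m :: nat
  assumes "k < m"
  shows "card {l. l < m \<and> (k = l \<or> k = (l + 1) mod m)} \<le> 2"
proof -
  have "{l. l < m \<and> (k = l \<or> k = (l + 1) mod m)} \<subseteq> {k, (k + m - 1) mod m}"
  proof
    fix l assume l: "l \<in> {l. l < m \<and> (k = l \<or> k = (l + 1) mod m)}"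
    show "l \<in> {k, (k + m - 1) mod m}"
    proof (cases "l + 1 < m")
      case True
      then show ?thesis using l by auto
    next
      case False
      then have "l = m - 1" using l by auto
      then show ?thesis using l \<open>k < m\<close> by auto
    qed
  qed
  then have "card {l. l < m \<and> (k = l \<or> k = (l + 1) mod m)} \<le> card {k, (k + m - 1) mod m}"
    by (intro card_mono) auto
  also have "\<dots> \<le> 2"
    by (simp add: card_insert_if)
  finally show ?thesis .
qed

lemma cyclic_quotient_row_sum_ge:
  assumes cyc: "cyclic_union_of_cliques h E m c" and "delta + eps \<ge> 0" and "k < m"
  shows "(\<Sum>l<m. cyclic_quotient h m c eps delta $$ (k,l))
    \<ge> eps + (1 - eps) * real h + (delta + eps) * (real m - 2)"
proof -
  define R where "R = {l. l < m \<and> (k = l \<or> k = (l + 1) mod m)}"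
  have "R \<subseteq> {..<m}" by (auto simp: R_def)
  have coupling: "cyclic_coupling m eps delta k l = (1 - eps) + (if l \<in> R then 0 else delta + eps)"
    if "l < m" for l
    using that by (simp add: cyclic_coupling_def R_def)
  have "real m - 2 \<le> real (card ({..<m} - R))"
    using card_cyclic_in_neighbours_le_2[OF \<open>k < m\<close>] \<open>R \<subseteq> {..<m}\<close>
    by (simp add: R_def card_Diff_subset finite_subset of_nat_diff)
  also have "\<dots> = (\<Sum>l\<in>{..<m} - R. 1)"
    by simp
  also have "\<dots> \<le> (\<Sum>l\<in>{..<m} - R. real (clique_size h c l))"
    using clique_size_pos[OF cyc] by (intro sum_mono) (simp add: Suc_le_eq)
  finally have size_bound: "real m - 2 \<le> (\<Sum>l\<in>{..<m} - R. real (clique_size h c l))" .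
  have "(\<Sum>l<m. cyclic_quotient h m c eps delta $$ (k,l))
      = (\<Sum>l<m. (1 - eps) * real (clique_size h c l)
          + (if l \<in> R then 0 else (delta + eps) * real (clique_size h c l))
          + (if k = l then eps else 0))"
    using \<open>k < m\<close> by (intro sum.cong) (simp_all add: cyclic_quotient_def coupling algebra_simps)
  also have "\<dots> = eps + (1 - eps) * (\<Sum>l<m. real (clique_size h c l))
        + (\<Sum>l<m. if l \<in> R then 0 else (delta + eps) * real (clique_size h c l))"
    using \<open>k < m\<close> by (simp add: sum.distrib sum_distrib_left)
  also have "(\<Sum>l<m. if l \<in> R then 0 else (delta + eps) * real (clique_size h c l))
      = (delta + eps) * (\<Sum>l\<in>{..<m} - R. real (clique_size h c l))"
    unfolding sum_distrib_left by (rule sum.mono_neutral_cong_right) auto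
  also have "(\<Sum>l<m. real (clique_size h c l)) = real h"
    using sum_clique_size[of h c m] cyc
    by (simp add: cyclic_union_of_cliques_def flip: of_nat_sum)
  finally show ?thesis
    using size_bound \<open>delta + eps \<ge> 0\<close> by (simp add: mult_left_mono)
qed

lemma cyclic_quotient_nonneg:
  assumes "legal_params eps delta" and "k < m" and "l < m"
  shows "cyclic_quotient h m c eps delta $$ (k,l) \<ge> 0"
  using assms legal_params_bounds[OF assms(1)]
  by (simp add: cyclic_quotient_def cyclic_coupling_def)

lemma cyclic_quotient_eigenvalue_Re_less:
  assumes cyc: "cyclic_union_of_cliques h E m c" and "m \<ge> 2"
    and stable: "\<And>\<nu>. eigenvalue (map_mat complex_of_real (1\<^sub>m h - ctln_W h E eps delta)) \<nu> \<Longrightarrow> Re \<nu> > 0"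
    and "eigenvalue (map_mat complex_of_real (cyclic_quotient h m c eps delta)) \<mu>"
  shows "Re \<mu> < real m * eps + (1 - eps) * real h"
proof -
  have Q: "cyclic_quotient h m c eps delta \<in> carrier_mat m m"
    by (simp add: cyclic_quotient_def)
  have "Re \<mu> < Re (mat_trace (map_mat complex_of_real (cyclic_quotient h m c eps delta)))"
    using Q assms eigenvalue_cyclic_quotient[OF cyc]
    by (intro eigenvalue_Re_less_mat_trace[where n = m]) auto
  also have "\<dots> = real m * eps + (1 - eps) * real h"
    using mat_trace_map_of_real[OF Q] mat_trace_cyclic_quotient[OF cyc] by simp
  finally show ?thesis .
qed

lemma cyclic_quotient_mult_ones_ge:
  assumes cyc: "cyclic_union_of_cliques h E m c" and "legal_params eps delta" and "k < m"
  shows "(cyclic_quotient h m c eps delta *\<^sub>v vec m (\<lambda>_. 1)) $ k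
    \<ge> real m * eps + (1 - eps) * real h + (delta * (real m - 2) - eps)"
proof -
  have "real m * eps + (1 - eps) * real h + (delta * (real m - 2) - eps)
      = eps + (1 - eps) * real h + (delta + eps) * (real m - 2)"
    by (simp add: algebra_simps)
  also have "\<dots> \<le> (\<Sum>l<m. cyclic_quotient h m c eps delta $$ (k,l))"
    using legal_params_bounds[OF assms(2)]
    by (intro cyclic_quotient_row_sum_ge[OF cyc _ \<open>k < m\<close>]) simp
  also have "\<dots> = (cyclic_quotient h m c eps delta *\<^sub>v vec m (\<lambda>_. 1)) $ k"
    using \<open>k < m\<close> by (simp add: cyclic_quotient_def scalar_prod_def atLeast0LessThan)
  finally show ?thesis .
qed

lemma cyclic_union_ex_eigenvalue_Re_nonpos:
  assumes cyc: "cyclic_union_of_cliques h E m c" and "m \<ge> 3" and legal: "legal_params eps delta"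
  shows "\<exists>\<nu>. eigenvalue (map_mat complex_of_real (1\<^sub>m h - ctln_W h E eps delta)) \<nu> \<and> Re \<nu> \<le> 0"
proof (rule ccontr)
  assume "\<nexists>\<nu>. eigenvalue (map_mat complex_of_real (1\<^sub>m h - ctln_W h E eps delta)) \<nu> \<and> Re \<nu> \<le> 0"
  then have stable: "Re \<nu> > 0"
    if "eigenvalue (map_mat complex_of_real (1\<^sub>m h - ctln_W h E eps delta)) \<nu>" for \<nu>
    using that by (meson not_le)
  define Q where "Q = cyclic_quotient h m c eps delta"
  define \<eta> where "\<eta> = delta * (real m - 2) - eps"
  have "real m * eps + (1 - eps) * real h + \<eta> \<le> real m * eps + (1 - eps) * real h"
  proof (rule Metzler_growth_le_spectral_bound[where Q = Q and x = "vec m (\<lambda>_. 1)" and p = 0])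
    show "Q \<in> carrier_mat m m"
      by (simp add: Q_def cyclic_quotient_def)
    show "Q $$ (k,l) \<ge> 0" if "k < m" "l < m" for k l
      unfolding Q_def using legal that by (rule cyclic_quotient_nonneg)
    show "Re \<mu> < real m * eps + (1 - eps) * real h"
      if "eigenvalue (map_mat complex_of_real Q) \<mu>" for \<mu>
      using \<open>m \<ge> 3\<close> that unfolding Q_def
      by (intro cyclic_quotient_eigenvalue_Re_less[OF cyc _ stable]) auto
    show "(Q *\<^sub>v vec m (\<lambda>_. 1)) $ k \<ge> (real m * eps + (1 - eps) * real h + \<eta>) * vec m (\<lambda>_. 1) $ k"
      if "k < m" for k
      using cyclic_quotient_mult_ones_ge[OF cyc legal that] that by (simp add: Q_def \<eta>_def)
  qed (use \<open>m \<ge> 3\<close> in simp_all)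
  moreover have "delta \<le> delta * (real m - 2)" and "eps < delta"
    using \<open>m \<ge> 3\<close> legal_params_bounds[OF legal] by simp_all
  ultimately show False
    by (simp add: \<eta>_def)
qed

theorem corollary4:
  fixes h m :: nat and E :: "nat \<Rightarrow> nat \<Rightarrow> bool" and c :: "nat \<Rightarrow> nat"
    and eps delta theta :: real
  assumes "m \<ge> 3"
    and "cyclic_union_of_cliques h E m c"
    and "legal_params eps delta"
    and "theta > 0"
  shows "\<not> stable_motif h E eps delta theta"
proof
  assume "stable_motif h E eps delta theta"
  moreover have "\<exists>\<nu>. eigenvalue (map_mat complex_of_real (1\<^sub>m h - ctln_W h E eps delta)) \<nu> \<and> Re \<nu> \<le> 0"
    using assms(2,1,3) by (rule cyclic_union_ex_eigenvalue_Re_nonpos)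
  ultimately show False
    by (force simp: stable_motif_def Let_def)
qed

end
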